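(* Let $n\ge2$ and let $G\subsetneq\mathbb{R}^n$ be a domain. Then for all $x,y\in G$, $$\frac{1}{\sqrt2}\,p_G(x,y)\le s_G(x,y)\le\sqrt2\,p_G(x,y),$$ and this inequality is sharp (the constants $1/\sqrt2$ and $\sqrt2$ cannot be improved over all such domains).
   Context: A domain is a non-empty, open, connected set; here it is a proper subset of $\mathbb{R}^n$. $d_G(x)=\inf\{|x-z|:z\in\partial G\}$, $s_G(x,y)=\frac{|x-y|}{\inf_{z\in\partial G}(|x-z|+|z-y|)}$, $p_G(x,y)=\frac{|x-y|}{\sqrt{|x-y|^2+4d_G(x)d_G(y)}}$. *)

theory Defs
  imports "HOL-Analysis.Analysis"
begin

definition proper_domain :: "'a::euclidean_space set \<Rightarrow> bool" where
  "proper_domain G \<longleftrightarrow> G \<noteq> {} \<and> open G \<and> connected G \<and> G \<noteq> UNIV"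

definition dG :: "'a::euclidean_space set \<Rightarrow> 'a \<Rightarrow> real" where
  "dG G x = Inf {dist x z | z. z \<in> frontier G}"

definition sG :: "'a::euclidean_space set \<Rightarrow> 'a \<Rightarrow> 'a \<Rightarrow> real" where
  "sG G x y = dist x y / Inf {dist x z + dist z y | z. z \<in> frontier G}"

definition pG :: "'a::euclidean_space set \<Rightarrow> 'a \<Rightarrow> 'a \<Rightarrow> real" where
  "pG G x y = dist x y / sqrt ((dist x y)\<^sup>2 + 4 * dG G x * dG G y)"

end

theory Submission
  imports Defs
begin

text \<open>Write \<open>t = |x - y|\<close>, \<open>S\<close> for the infimum in the denominator of \<open>s\<^sub>G\<close>, and
  \<open>d\<^sub>x, d\<^sub>y\<close> for the boundary distances. The triangle inequality gives
  \<open>max t (d\<^sub>x + d\<^sub>y) \<le> S \<le> t + 2 min d\<^sub>x d\<^sub>y\<close>, the upper bound by routing through a boundary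
  point nearest to \<open>x\<close> (resp. \<open>y\<close>). These bounds alone force
  \<open>S\<^sup>2 \<le> (t + 2 min d\<^sub>x d\<^sub>y)\<^sup>2 \<le> 2 (t\<^sup>2 + 4 d\<^sub>x d\<^sub>y)\<close> and
  \<open>t\<^sup>2 + 4 d\<^sub>x d\<^sub>y \<le> t\<^sup>2 + (d\<^sub>x + d\<^sub>y)\<^sup>2 \<le> 2 S\<^sup>2\<close>, which are the two inequalities.
  The lower constant is attained in the unit ball at \<open>\<plusminus>v\<close> with \<open>|v| = 1/2\<close>, the upper one
  in the punctured space \<open>\<real>\<^sup>n - {0}\<close> (connected as \<open>n \<ge> 2\<close>) at \<open>\<plusminus>v\<close>.\<close>

definition boundary_detour :: "'a::euclidean_space set \<Rightarrow> 'a \<Rightarrow> 'a \<Rightarrow> real" where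
  "boundary_detour G x y = Inf {dist x z + dist z y | z. z \<in> frontier G}"

lemma sG_eq_dist_divide_boundary_detour: "sG G x y = dist x y / boundary_detour G x y"
  by (simp add: sG_def boundary_detour_def)

lemma dG_eq_infdist: "frontier G \<noteq> {} \<Longrightarrow> dG G x = infdist x (frontier G)"
  by (simp add: dG_def infdist_notempty Setcompr_eq_image)

lemma dG_nonneg: "frontier G \<noteq> {} \<Longrightarrow> 0 \<le> dG G x"
  by (simp add: dG_eq_infdist infdist_nonneg)

lemma boundary_detour_le: "z \<in> frontier G \<Longrightarrow> boundary_detour G x y \<le> dist x z + dist z y"
  unfolding boundary_detour_def
  by (rule cInf_lower) (auto intro: bdd_belowI[where m = 0])

lemma le_boundary_detour:
  assumes "frontier G \<noteq> {}" and "\<And>z. z \<in> frontier G \<Longrightarrow> c \<le> dist x z + dist z y"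
  shows "c \<le> boundary_detour G x y"
  unfolding boundary_detour_def by (rule cInf_greatest) (use assms in auto)

lemma dist_le_boundary_detour: "frontier G \<noteq> {} \<Longrightarrow> dist x y \<le> boundary_detour G x y"
  by (rule le_boundary_detour) (auto intro: dist_triangle)

lemma dG_add_dG_le_boundary_detour:
  "frontier G \<noteq> {} \<Longrightarrow> dG G x + dG G y \<le> boundary_detour G x y"
  by (rule le_boundary_detour) (simp_all add: dG_eq_infdist, metis add_mono dist_commute infdist_le)

lemma boundary_detour_le_dist_add_dG:
  assumes "frontier G \<noteq> {}"
  shows "boundary_detour G x y \<le> dist x y + 2 * dG G x"
proof -
  obtain z where z: "z \<in> frontier G" "dG G x = dist x z"
    using infdist_attains_inf[OF frontier_closed assms] assms by (metis dG_eq_infdist)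
  have "boundary_detour G x y \<le> dist x z + dist z y"
    using z(1) by (rule boundary_detour_le)
  also have "\<dots> \<le> dist x y + 2 * dist x z"
    using dist_triangle[of z y x] by (simp add: dist_commute)
  finally show ?thesis using z(2) by simp
qed

lemma boundary_detour_commute: "boundary_detour G x y = boundary_detour G y x"
  unfolding boundary_detour_def by (simp add: dist_commute add.commute)

lemma sq_le_two_sq_of_two_sided_bounds:
  fixes t S a b :: real
  assumes "0 \<le> t" "0 \<le> a" "0 \<le> b"
    and "t \<le> S" "a + b \<le> S" "S \<le> t + 2 * a" "S \<le> t + 2 * b"
  shows "S\<^sup>2 \<le> 2 * (t\<^sup>2 + 4 * a * b)" and "t\<^sup>2 + 4 * a * b \<le> 2 * S\<^sup>2"
proof -
  define m where "m = min a b"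
  have "S\<^sup>2 \<le> (t + 2 * m)\<^sup>2"
    using assms by (auto simp: m_def intro!: power_mono)
  also have "\<dots> \<le> 2 * (t\<^sup>2 + 4 * m * m)"
    using sum_squares_ge_zero[of "t - 2 * m" 0] by (simp add: power2_eq_square algebra_simps)
  also have "\<dots> \<le> 2 * (t\<^sup>2 + 4 * a * b)"
    using assms by (auto simp: m_def intro!: mult_mono)
  finally show "S\<^sup>2 \<le> 2 * (t\<^sup>2 + 4 * a * b)" .
  have "4 * a * b \<le> (a + b)\<^sup>2"
    using sum_squares_ge_zero[of "a - b" 0] by (simp add: power2_eq_square algebra_simps)
  moreover have "t\<^sup>2 \<le> S\<^sup>2" "(a + b)\<^sup>2 \<le> S\<^sup>2"
    using assms by (auto intro!: power_mono)
  ultimately show "t\<^sup>2 + 4 * a * b \<le> 2 * S\<^sup>2" by linarith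
qed

lemma sG_pG_bounds:
  fixes G :: "'a::euclidean_space set"
  assumes "frontier G \<noteq> {}"
  shows "(1 / sqrt 2) * pG G x y \<le> sG G x y" and "sG G x y \<le> sqrt 2 * pG G x y"
proof -
  define t S Q where "t = dist x y" and "S = boundary_detour G x y"
    and "Q = sqrt (t\<^sup>2 + 4 * dG G x * dG G y)"
  have s: "sG G x y = t / S" and p: "pG G x y = t / Q"
    by (simp_all add: sG_eq_dist_divide_boundary_detour pG_def t_def S_def Q_def)
  have bounds: "0 \<le> t" "t \<le> S" "dG G x + dG G y \<le> S"
    "S \<le> t + 2 * dG G x" "S \<le> t + 2 * dG G y"
    unfolding t_def S_def
    using dist_le_boundary_detour[OF assms] dG_add_dG_le_boundary_detour[OF assms]
      boundary_detour_le_dist_add_dG[OF assms, of x y]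
      boundary_detour_le_dist_add_dG[OF assms, of y x]
    by (simp_all add: boundary_detour_commute[of G y x] dist_commute[of y x])
  note sq = sq_le_two_sq_of_two_sided_bounds[OF bounds(1) dG_nonneg[OF assms] dG_nonneg[OF assms]
      bounds(2-5)]
  have S_le: "S \<le> sqrt 2 * Q"
    using sq(1) by (simp add: Q_def real_sqrt_mult[symmetric] real_le_rsqrt)
  have "Q \<le> sqrt (2 * S\<^sup>2)"
    unfolding Q_def using sq(2) by (rule real_sqrt_le_mono)
  then have Q_le: "Q \<le> sqrt 2 * S"
    using bounds by (simp add: real_sqrt_mult)
  have "(1 / sqrt 2) * (t / Q) \<le> t / S \<and> t / S \<le> sqrt 2 * (t / Q)"
  proof (cases "t = 0")
    case False
    then have "0 < t" "0 < S" "0 < Q"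
      using bounds dG_nonneg[OF assms] by (auto simp: Q_def add_pos_nonneg)
    then show ?thesis
      using S_le Q_le by (simp add: field_simps)
  qed simp
  then show "(1 / sqrt 2) * pG G x y \<le> sG G x y" "sG G x y \<le> sqrt 2 * pG G x y"
    by (simp_all add: s p)
qed

lemma frontier_nonempty_if_proper_domain: "proper_domain G \<Longrightarrow> frontier G \<noteq> {}"
  by (simp add: proper_domain_def frontier_eq_empty)

lemma proper_domain_ball: "0 < r \<Longrightarrow> proper_domain (ball a r)"
  unfolding proper_domain_def by (metis bounded_ball not_bounded_UNIV centre_in_ball empty_iff
      open_ball connected_ball)

lemma proper_domain_punctured:
  "2 \<le> DIM('a) \<Longrightarrow> proper_domain (- {a :: 'a::euclidean_space})"
  unfolding proper_domain_def using UNIV_not_singleton[of a]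
  by (auto simp: connected_punctured_universe)

lemma frontier_singleton: "frontier {a :: 'a::{t1_space, perfect_space}} = {a}"
  by (simp add: frontier_def)

lemma dist_minus_self: "dist (- v) v = 2 * norm (v :: 'a::real_normed_vector)"
  by (simp add: dist_norm norm_minus_commute[of "-v"] flip: scaleR_2)

lemma sG_unit_ball_antipodal_le:
  fixes v :: "'a::euclidean_space"
  assumes "norm v = 1 / 2"
  shows "sG (ball 0 1) (- v) v \<le> 1 / 2"
proof -
  have "2 \<le> boundary_detour (ball 0 1) (- v) v"
  proof (rule le_boundary_detour)
    fix z :: 'a
    assume "z \<in> frontier (ball 0 1)"
    then have "2 = norm ((z + v) + (z - v))"
      by (simp add: scaleR_2[symmetric])
    also have "\<dots> \<le> dist (- v) z + dist z v"
      by (metis norm_triangle_ineq dist_norm diff_minus_eq_add dist_commute)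
    finally show "2 \<le> dist (- v) z + dist z v" .
  qed simp
  moreover have "dist (- v) v = 1"
    using assms by (simp add: dist_minus_self)
  ultimately show ?thesis
    by (simp add: sG_eq_dist_divide_boundary_detour field_simps)
qed

lemma pG_unit_ball_antipodal_ge:
  fixes v :: "'a::euclidean_space"
  assumes "norm v = 1 / 2"
  shows "1 / sqrt 2 \<le> pG (ball 0 1) (- v) v"
proof -
  have frontier: "frontier (ball (0::'a) 1) \<noteq> {}"
    by simp
  have "dG (ball 0 1) w \<le> 1 / 2" if "w = v \<or> w = - v" for w
  proof -
    have "2 *\<^sub>R w \<in> frontier (ball 0 1)"
      using that assms by auto
    moreover have "dist w (2 *\<^sub>R w) = 1 / 2"
      using that assms by (auto simp: dist_norm scaleR_2)
    ultimately show ?thesis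
      by (metis dG_eq_infdist[OF frontier] infdist_le)
  qed
  moreover have nonneg: "0 \<le> dG (ball 0 1) w" for w :: 'a
    using frontier by (rule dG_nonneg)
  ultimately have "4 * dG (ball 0 1) (- v) * dG (ball 0 1) v \<le> 1"
    using mult_mono[of "dG (ball 0 1) (- v)" "1 / 2" "dG (ball 0 1) v" "1 / 2"] by auto
  then have "1 / sqrt 2 \<le> 1 / sqrt (1 + 4 * dG (ball 0 1) (- v) * dG (ball 0 1) v)"
    using nonneg[of v] nonneg[of "- v"] by (intro frac_le) (auto intro: add_pos_nonneg)
  moreover have "dist (- v) v = 1"
    using assms by (simp add: dist_minus_self)
  ultimately show ?thesis
    by (simp add: pG_def)
qed

lemma sG_punctured_antipodal: "v \<noteq> 0 \<Longrightarrow> sG (- {0}) v (- v) = 1"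
  by (simp add: sG_eq_dist_divide_boundary_detour boundary_detour_def frontier_singleton
      dist_commute[of v] dist_minus_self)

lemma pG_punctured_antipodal: "v \<noteq> 0 \<Longrightarrow> pG (- {0}) v (- v) = 1 / sqrt 2"
proof -
  assume "v \<noteq> 0"
  have "dG (- {0}) w = norm w" for w :: 'a
    by (simp add: dG_eq_infdist frontier_singleton)
  then have "pG (- {0}) v (- v) = 2 * norm v / sqrt (8 * (norm v)\<^sup>2)"
    by (simp add: pG_def dist_commute[of v] dist_minus_self power_mult_distrib power2_eq_square)
  also have "\<dots> = 1 / sqrt 2"
    using \<open>v \<noteq> 0\<close> real_sqrt_mult[of 4 2] by (simp add: real_sqrt_mult field_simps)
  finally show ?thesis .
qed

lemma sG_lower_bound_sharp:
  assumes "1 / sqrt 2 < c"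
  shows "\<exists>(G::'a::euclidean_space set) x y. proper_domain G \<and> x \<in> G \<and> y \<in> G \<and>
           \<not> c * pG G x y \<le> sG G x y"
proof -
  obtain v :: 'a where v: "norm v = 1 / 2"
    using vector_choose_size by (metis divide_nonneg_nonneg zero_le_one zero_le_numeral)
  have "0 < 1 / sqrt 2"
    by simp
  have "1 / 2 = (1 / sqrt 2) * (1 / sqrt 2)"
    by simp
  also have "\<dots> < c * (1 / sqrt 2)"
    using assms \<open>0 < 1 / sqrt 2\<close> by (rule mult_strict_right_mono)
  also have "\<dots> \<le> c * pG (ball 0 1) (- v) v"
    using assms \<open>0 < 1 / sqrt 2\<close> by (intro mult_left_mono pG_unit_ball_antipodal_ge[OF v]) linarith
  finally have "\<not> c * pG (ball 0 1) (- v) v \<le> sG (ball 0 1) (- v) v"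
    using sG_unit_ball_antipodal_le[OF v] by linarith
  moreover have "- v \<in> ball 0 1" "v \<in> ball 0 1"
    using v by auto
  ultimately show ?thesis
    using proper_domain_ball[OF zero_less_one, of 0] by blast
qed

lemma sG_upper_bound_sharp:
  assumes "2 \<le> DIM('a::euclidean_space)" and "c < sqrt 2"
  shows "\<exists>(G::'a set) x y. proper_domain G \<and> x \<in> G \<and> y \<in> G \<and> \<not> sG G x y \<le> c * pG G x y"
proof -
  obtain v :: 'a where "v \<noteq> 0"
    using vector_choose_size[of 1] by (metis norm_zero zero_le_one zero_neq_one)
  moreover have "c * (1 / sqrt 2) < 1"
    using assms(2) by (simp add: field_simps)
  ultimately have "\<not> sG (- {0}) v (- v) \<le> c * pG (- {0}) v (- v)"
    by (simp add: sG_punctured_antipodal pG_punctured_antipodal)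
  moreover have "v \<in> - {0}" "- v \<in> - {0}"
    using \<open>v \<noteq> 0\<close> by auto
  ultimately show ?thesis
    using proper_domain_punctured[OF assms(1), of 0] by blast
qed

theorem theorem3p5:
  assumes "DIM('a::euclidean_space) \<ge> 2"
  shows "(\<forall>(G::'a set) x y. proper_domain G \<longrightarrow> x \<in> G \<longrightarrow> y \<in> G \<longrightarrow>
            (1 / sqrt 2) * pG G x y \<le> sG G x y \<and> sG G x y \<le> sqrt 2 * pG G x y)
       \<and> (\<forall>c > 1 / sqrt 2. \<exists>(G::'a set) x y. proper_domain G \<and> x \<in> G \<and> y \<in> G \<and>
            \<not> (c * pG G x y \<le> sG G x y))
       \<and> (\<forall>c < sqrt 2. \<exists>(G::'a set) x y. proper_domain G \<and> x \<in> G \<and> y \<in> G \<and>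
            \<not> (sG G x y \<le> c * pG G x y))"
  using sG_pG_bounds[OF frontier_nonempty_if_proper_domain] sG_lower_bound_sharp
    sG_upper_bound_sharp[OF assms] by blast

end
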